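(* Let $z_n=(0,1/n)$, $n\in\mathbb{N}$, $O=(0,0)$, $K=\{z_n\}_{n\in\mathbb{N}}\cup\{O\}$, $Z=\mathbb{R}^2\setminus K$, and let $\Delta$ be the foliation of $Z$ whose leaves are the connected components of the intersections of $Z$ with horizontal lines $\mathbb{R}\times\{y\}$. Then every leaf of $\Delta$ admits a cross-section through it, but the family of special leaves of $\Delta$ is not locally finite. Consequently there is no striped atlas on $Z$ whose canonical foliation is $\Delta$.
   Context: For a leaf $\omega$ of a foliation $\Delta$ on a surface $Z$, let $J_\omega=[0,1)$ if $\omega\subset\partial Z$ and $J_\omega=(-1,1)$ otherwise; a cross-section through $\omega$ is a continuous map $\gamma:J_\omega\to Z$ with $\gamma(0)\in\omega$ such that $\gamma(s),\gamma(t)$ lie in distinct leaves for $s\ne t$. A subset is saturated if it is a union of leaves; $\hat\omega$ is the intersection of the closures of all saturated neighbourhoods of $\omega$; $\omega$ is special if $\omega\ne\hat\omega$. A striped atlas is a quotient map $q$ from an at most countable disjoint union of strips (sets $S$ with $\mathbb{R}\times(u,v)\subset S\subset\mathbb{R}\times[u,v]$ open in $\mathbb{R}\times[u,v]$) onto $Z$, gluing pairs $X_\gamma,Y_\gamma$ of mutually distinct boundary intervals (components of $S\cap(\mathbb{R}\times\{u,v\})$) via $q(X_\gamma)=q(Y_\gamma)$, injective elsewhere, with $q|_{X_\gamma},q|_{Y_\gamma}$ embeddings with closed images; its canonical foliation has as leaves the images of horizontal lines and boundary intervals of the strips. *)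

theory Defs
  imports "HOL-Analysis.Analysis"
begin

text \<open>A foliation on a surface Z (a subset of the plane with the subspace topology)
  is represented by its set of leaves L, a partition of Z.\<close>

definition surface_boundary :: "(real \<times> real) set \<Rightarrow> (real \<times> real) set" where
  "surface_boundary Z = {x \<in> Z. \<not> (\<exists>U V. openin (top_of_set Z) U \<and> x \<in> U \<and>
        open (V :: (real \<times> real) set) \<and> U homeomorphic V)}"

definition cross_interval :: "(real \<times> real) set \<Rightarrow> (real \<times> real) set \<Rightarrow> real set" where
  "cross_interval Z \<omega> = (if \<omega> \<subseteq> surface_boundary Z then {0..<1} else {-1<..<1})"

definition cross_section ::
  "(real \<times> real) set \<Rightarrow> (real \<times> real) set set \<Rightarrow> (real \<times> real) set \<Rightarrow> (real \<Rightarrow> real \<times> real) \<Rightarrow> bool" where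
  "cross_section Z L \<omega> \<gamma> \<longleftrightarrow>
     continuous_on (cross_interval Z \<omega>) \<gamma> \<and> \<gamma> ` cross_interval Z \<omega> \<subseteq> Z \<and>
     \<gamma> 0 \<in> \<omega> \<and>
     (\<forall>s \<in> cross_interval Z \<omega>. \<forall>t \<in> cross_interval Z \<omega>. s \<noteq> t \<longrightarrow>
        \<not> (\<exists>l\<in>L. \<gamma> s \<in> l \<and> \<gamma> t \<in> l))"

definition saturated :: "(real \<times> real) set set \<Rightarrow> (real \<times> real) set \<Rightarrow> bool" where
  "saturated L A \<longleftrightarrow> (\<exists>F \<subseteq> L. A = \<Union>F)"

definition saturated_nbhd ::
  "(real \<times> real) set \<Rightarrow> (real \<times> real) set set \<Rightarrow> (real \<times> real) set \<Rightarrow> (real \<times> real) set \<Rightarrow> bool" where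
  "saturated_nbhd Z L \<omega> N \<longleftrightarrow> saturated L N \<and>
     (\<exists>U. openin (top_of_set Z) U \<and> \<omega> \<subseteq> U \<and> U \<subseteq> N)"

definition leaf_hat ::
  "(real \<times> real) set \<Rightarrow> (real \<times> real) set set \<Rightarrow> (real \<times> real) set \<Rightarrow> (real \<times> real) set" where
  "leaf_hat Z L \<omega> = \<Inter> {top_of_set Z closure_of N | N. saturated_nbhd Z L \<omega> N}"

definition special_leaf ::
  "(real \<times> real) set \<Rightarrow> (real \<times> real) set set \<Rightarrow> (real \<times> real) set \<Rightarrow> bool" where
  "special_leaf Z L \<omega> \<longleftrightarrow> \<omega> \<noteq> leaf_hat Z L \<omega>"

definition strip :: "real \<Rightarrow> real \<Rightarrow> (real \<times> real) set \<Rightarrow> bool" where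
  "strip u v S \<longleftrightarrow> u < v \<and>
     {p. u < snd p \<and> snd p < v} \<subseteq> S \<and> S \<subseteq> {p. u \<le> snd p \<and> snd p \<le> v} \<and>
     openin (top_of_set {p :: real \<times> real. u \<le> snd p \<and> snd p \<le> v}) S"

definition boundary_intervals :: "real \<Rightarrow> real \<Rightarrow> (real \<times> real) set \<Rightarrow> (real \<times> real) set set" where
  "boundary_intervals u v S = components (S \<inter> {p. snd p = u \<or> snd p = v})"

text \<open>The disjoint union of the strips S i, i in I (I at most countable), is the subset
  Sigma I S of nat x R^2 (nat carries the discrete topology). G is the set of glued pairs
  (X_gamma, Y_gamma) of boundary intervals, viewed as subsets of the disjoint union.\<close>

definition striped_atlas ::
  "nat set \<Rightarrow> (nat \<Rightarrow> real) \<Rightarrow> (nat \<Rightarrow> real) \<Rightarrow> (nat \<Rightarrow> (real \<times> real) set) \<Rightarrow>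
   ((nat \<times> (real \<times> real)) set \<times> (nat \<times> (real \<times> real)) set) set \<Rightarrow>
   (nat \<times> (real \<times> real) \<Rightarrow> real \<times> real) \<Rightarrow> (real \<times> real) set \<Rightarrow> bool" where
  "striped_atlas I u v S G q Z \<longleftrightarrow>
     (\<forall>i\<in>I. strip (u i) (v i) (S i)) \<and>
     (\<forall>(A, B)\<in>G.
        (\<exists>i\<in>I. \<exists>X\<in>boundary_intervals (u i) (v i) (S i). A = {i} \<times> X) \<and>
        (\<exists>j\<in>I. \<exists>Y\<in>boundary_intervals (u j) (v j) (S j). B = {j} \<times> Y) \<and> A \<noteq> B) \<and>
     (\<forall>g\<in>G. \<forall>g'\<in>G. g \<noteq> g' \<longrightarrow> {fst g, snd g} \<inter> {fst g', snd g'} = {}) \<and>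
     quotient_map (top_of_set (Sigma I S)) (top_of_set Z) q \<and>
     (\<forall>(A, B)\<in>G. q ` A = q ` B \<and>
        embedding_map (top_of_set A) (top_of_set Z) q \<and>
        embedding_map (top_of_set B) (top_of_set Z) q \<and>
        closedin (top_of_set Z) (q ` A) \<and> closedin (top_of_set Z) (q ` B)) \<and>
     inj_on q (Sigma I S - \<Union> {A \<union> B | A B. (A, B) \<in> G})"

definition canonical_foliation ::
  "nat set \<Rightarrow> (nat \<Rightarrow> real) \<Rightarrow> (nat \<Rightarrow> real) \<Rightarrow> (nat \<Rightarrow> (real \<times> real) set) \<Rightarrow>
   (nat \<times> (real \<times> real) \<Rightarrow> real \<times> real) \<Rightarrow> (real \<times> real) set set" where
  "canonical_foliation I u v S q =
     {q ` ({i} \<times> (UNIV \<times> {t})) | i t. i \<in> I \<and> u i < t \<and> t < v i} \<union>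
     {q ` ({i} \<times> X) | i X. i \<in> I \<and> X \<in> boundary_intervals (u i) (v i) (S i)}"

definition Kset :: "(real \<times> real) set" where
  "Kset = {(0, 1 / real n) | n. n \<ge> 1} \<union> {(0, 0)}"

definition Zset :: "(real \<times> real) set" where
  "Zset = UNIV - Kset"

definition Delta :: "(real \<times> real) set set" where
  "Delta = {connected_component_set (Zset \<inter> {p. snd p = snd z}) z | z. z \<in> Zset}"

end

theory Submission
  imports Defs "HOL-Homology.Invariance_of_Domain"
begin

text \<open>The leaves of \<open>Delta\<close> are full horizontal lines, except at the heights \<open>0\<close> and
  \<open>1/n\<close> of the removed points, where the line splits into two half-lines. Vertical segments
  off the axis are cross-sections, and the right half-lines at heights \<open>1/n\<close> are special,
  since nearby generic leaves are full lines; they accumulate at \<open>(1, 0)\<close>.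

  Suppose a striped atlas \<open>q\<close> induced \<open>Delta\<close>. By invariance of domain, interior points of
  strips have singleton fibres. Preimages of the points \<open>(1, 1/m)\<close> accumulate in some strip at
  a preimage of \<open>(1, 0)\<close>, so the interior of that strip maps some line onto a right half-leaf
  at a height \<open>1/n\<close>. Nearby lines of the strip map onto full lines at generic heights, whose
  points over \<open>x = -1\<close> converge to \<open>(-1, 1/n)\<close>. As \<open>q\<close> is a quotient map, their
  preimages, which lie on these strip lines, would accumulate at a point of the strip mapping
  to \<open>(-1, 1/n)\<close>, i.e. on the right half-leaf or on one of the generic lines; both are
  impossible.\<close>

section \<open>The leaves of \<open>Delta\<close>\<close>

definition generic_height :: "real \<Rightarrow> bool" where
  "generic_height c \<longleftrightarrow> c \<noteq> 0 \<and> (\<forall>j::nat. j \<ge> 1 \<longrightarrow> c \<noteq> 1 / real j)"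

lemma countable_non_generic_heights: "countable {c. \<not> generic_height c}"
proof (rule countable_subset)
  show "{c. \<not> generic_height c} \<subseteq> insert 0 (range (\<lambda>j::nat. 1 / real j))"
    unfolding generic_height_def by auto
qed simp

lemma generic_height_between:
  assumes "a < b"
  obtains c where "a < c" "c < b" "generic_height c"
proof -
  have "\<not> {a<..<b} \<subseteq> {c. \<not> generic_height c}"
    using assms uncountable_open_interval countable_non_generic_heights countable_subset by blast
  then show ?thesis using that by auto
qed

lemma axis_in_Zset_iff: "(0, c) \<in> Zset \<longleftrightarrow> generic_height c"
  unfolding Zset_def Kset_def generic_height_def by auto

lemma in_Zset_if_fst_nonzero: "fst p \<noteq> 0 \<Longrightarrow> p \<in> Zset"
  unfolding Zset_def Kset_def by auto

lemma in_Zset_if_generic_height: "generic_height c \<Longrightarrow> (x, c) \<in> Zset"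
  using axis_in_Zset_iff in_Zset_if_fst_nonzero by (cases "x = 0") auto

lemma axis_notin_Zset: "n \<ge> 1 \<Longrightarrow> (0, 1 / real n) \<notin> Zset"
  unfolding axis_in_Zset_iff generic_height_def by blast

definition leaf :: "real \<times> real \<Rightarrow> (real \<times> real) set" where
  "leaf z = connected_component_set (Zset \<inter> {p. snd p = snd z}) z"

lemma Delta_eq_leaf_image: "Delta = leaf ` Zset"
  unfolding Delta_def leaf_def by blast

lemma mem_leaf_self: "z \<in> Zset \<Longrightarrow> z \<in> leaf z"
  unfolding leaf_def by (simp add: connected_component_refl_eq)

lemma leaf_subset: "leaf z \<subseteq> Zset \<inter> {p. snd p = snd z}"
  unfolding leaf_def by (rule connected_component_subset)

lemma Delta_leaf_eq:
  assumes "l \<in> Delta" "p \<in> l"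
  shows "l = leaf p"
proof -
  obtain z where "z \<in> Zset" "l = leaf z"
    using assms(1) unfolding Delta_eq_leaf_image by blast
  moreover have "snd p = snd z" using assms(2) leaf_subset calculation by blast
  ultimately show ?thesis
    using assms(2) unfolding leaf_def by (metis connected_component_eq)
qed

lemma Delta_leaf_horizontal: "l \<in> Delta \<Longrightarrow> p \<in> l \<Longrightarrow> p' \<in> l \<Longrightarrow> snd p' = snd p"
  using Delta_leaf_eq leaf_subset by blast

lemma leaf_generic_height:
  assumes "generic_height (snd z)"
  shows "leaf z = {p. snd p = snd z}"
proof -
  have "connected (range (\<lambda>x::real. (x, snd z)))"
    by (intro connected_continuous_image continuous_intros) auto
  also have "range (\<lambda>x::real. (x, snd z)) = {p. snd p = snd z}" by force
  finally have line: "connected {p :: real \<times> real. snd p = snd z}" .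
  have "p \<in> Zset" if "snd p = snd z" for p
    using in_Zset_if_generic_height[OF assms, of "fst p"] that by (metis prod.collapse)
  then have "Zset \<inter> {p. snd p = snd z} = {p. snd p = snd z}" by blast
  then show ?thesis
    unfolding leaf_def using connected_component_eq_self[OF line] by simp
qed

lemma leaf_right_half:
  assumes "fst z > 0" "(0, snd z) \<notin> Zset"
  shows "leaf z = {p. fst p > 0 \<and> snd p = snd z}"
proof
  have "connected (leaf z)" unfolding leaf_def by simp
  then have interval: "is_interval (fst ` leaf z)"
    unfolding is_interval_connected_1 by (intro connected_continuous_image continuous_intros)
  have "z \<in> leaf z" using mem_leaf_self in_Zset_if_fst_nonzero assms(1) by simp
  then have z: "fst z \<in> fst ` leaf z" by (rule imageI)
  have no_zero: "0 \<notin> fst ` leaf z"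
  proof
    assume "0 \<in> fst ` leaf z"
    then obtain p where "p \<in> leaf z" "fst p = 0" by (metis imageE)
    moreover have "p \<in> Zset" "snd p = snd z" using \<open>p \<in> leaf z\<close> leaf_subset[of z] by blast+
    ultimately have "(0, snd z) \<in> Zset" by (metis prod.collapse)
    then show False using assms(2) by blast
  qed
  have pos: "x > 0" if x: "x \<in> fst ` leaf z" for x
  proof (rule ccontr)
    assume "\<not> x > 0"
    then have "x \<le> 0" "0 \<le> fst z" using assms(1) by auto
    then have "0 \<in> fst ` leaf z" using interval x z unfolding is_interval_1 by blast
    then show False using no_zero by blast
  qed
  show "leaf z \<subseteq> {p. fst p > 0 \<and> snd p = snd z}"
  proof
    fix p assume "p \<in> leaf z"
    then show "p \<in> {p. fst p > 0 \<and> snd p = snd z}" using pos leaf_subset by blast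
  qed
next
  let ?R = "(\<lambda>x::real. (x, snd z)) ` {0<..}"
  have "z \<in> ?R" using assms(1) by (metis greaterThan_iff image_eqI prod.collapse)
  moreover have "connected ?R" by (intro connected_continuous_image continuous_intros) auto
  moreover have "?R \<subseteq> Zset \<inter> {p. snd p = snd z}" using in_Zset_if_fst_nonzero by auto
  ultimately have "?R \<subseteq> leaf z" unfolding leaf_def by (rule connected_component_maximal)
  moreover have "{p. fst p > 0 \<and> snd p = snd z} = ?R" by force
  ultimately show "{p. fst p > 0 \<and> snd p = snd z} \<subseteq> leaf z" by simp
qed

lemma Delta_has_cross_sections: "\<omega> \<in> Delta \<Longrightarrow> \<exists>\<gamma>. cross_section Zset Delta \<omega> \<gamma>"
proof -
  assume "\<omega> \<in> Delta"
  then obtain z where z: "z \<in> Zset" "\<omega> = leaf z" unfolding Delta_eq_leaf_image by blast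
  obtain p where p: "p \<in> \<omega>" "fst p \<noteq> 0"
  proof (cases "fst z = 0")
    case True
    then have "generic_height (snd z)" using z(1) axis_in_Zset_iff by (metis prod.collapse)
    then have "(1, snd z) \<in> \<omega>" using z(2) leaf_generic_height by simp
    then show ?thesis using that by fastforce
  next
    case False
    then show ?thesis using that z mem_leaf_self by blast
  qed
  define \<gamma> where "\<gamma> s = (fst p, snd p + s)" for s
  have "continuous_on (cross_interval Zset \<omega>) \<gamma>"
    unfolding \<gamma>_def by (intro continuous_intros)
  moreover have "\<gamma> ` cross_interval Zset \<omega> \<subseteq> Zset"
    unfolding \<gamma>_def using in_Zset_if_fst_nonzero p by auto
  moreover have "\<gamma> 0 \<in> \<omega>" unfolding \<gamma>_def using p by simp
  moreover have "\<not> (\<exists>l\<in>Delta. \<gamma> s \<in> l \<and> \<gamma> t \<in> l)" if "s \<noteq> t" for s t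
    using that Delta_leaf_horizontal unfolding \<gamma>_def by fastforce
  ultimately show ?thesis unfolding cross_section_def by blast
qed

definition right_leaf :: "nat \<Rightarrow> (real \<times> real) set" where
  "right_leaf n = leaf (1, 1 / real n)"

lemma right_leaf_in_Delta: "right_leaf n \<in> Delta"
  unfolding right_leaf_def Delta_eq_leaf_image using in_Zset_if_fst_nonzero by simp

lemma right_leaf_eq: "n \<ge> 1 \<Longrightarrow> right_leaf n = {p. fst p > 0 \<and> snd p = 1 / real n}"
  unfolding right_leaf_def using leaf_right_half axis_notin_Zset by simp

text \<open>Leaves at generic heights just above \<open>1/n\<close> are full lines, so every saturated
  neighbourhood of the right half-line at height \<open>1/n\<close> accumulates on the left one.\<close>

lemma right_leaf_special:
  assumes "n \<ge> 1"
  shows "special_leaf Zset Delta (right_leaf n)"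
proof -
  let ?P = "(-1, 1 / real n) :: real \<times> real"
  have "?P \<in> (top_of_set Zset) closure_of N" if N: "saturated_nbhd Zset Delta (right_leaf n) N" for N
  proof -
    obtain F where F: "F \<subseteq> Delta" "N = \<Union>F"
      using N unfolding saturated_nbhd_def saturated_def by blast
    obtain U where U: "openin (top_of_set Zset) U" "right_leaf n \<subseteq> U" "U \<subseteq> N"
      using N unfolding saturated_nbhd_def by blast
    obtain O' where O': "open O'" "U = Zset \<inter> O'" using U(1) openin_open by blast
    have "(1, 1 / real n) \<in> O'" using U(2) O' right_leaf_eq[OF assms] by auto
    then obtain e2 where e2: "e2 > 0" "ball (1, 1 / real n) e2 \<subseteq> O'"
      using O'(1) open_contains_ball by blast
    show ?thesis unfolding in_closure_of
    proof (intro conjI allI impI)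
      show "?P \<in> topspace (top_of_set Zset)" using in_Zset_if_fst_nonzero by simp
      fix T assume T: "?P \<in> T \<and> openin (top_of_set Zset) T"
      obtain Op where Op: "open Op" "T = Zset \<inter> Op" using T openin_open by blast
      then obtain e1 where e1: "e1 > 0" "ball ?P e1 \<subseteq> Op"
        using T open_contains_ball by blast
      obtain c where c: "1 / real n < c" "c < 1 / real n + min e1 e2" "generic_height c"
        using generic_height_between[of "1 / real n" "1 / real n + min e1 e2"] e1 e2 by auto
      have "(1, c) \<in> U" using c e2 O' in_Zset_if_fst_nonzero
        by (force simp: dist_Pair_Pair dist_real_def)
      then obtain l where l: "l \<in> F" "(1, c) \<in> l" using U F by blast
      then have "(-1, c) \<in> l"
        using F Delta_leaf_eq[of l "(1, c)"] leaf_generic_height[of "(1, c)"] c(3) by auto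
      then have "(-1, c) \<in> N" using F l by blast
      moreover have "(-1, c) \<in> T" using c e1 Op in_Zset_if_fst_nonzero
        by (force simp: dist_Pair_Pair dist_real_def)
      ultimately show "\<exists>y. y \<in> N \<and> y \<in> T" by blast
    qed
  qed
  then have "?P \<in> leaf_hat Zset Delta (right_leaf n)"
    unfolding leaf_hat_def by (intro InterI) auto
  moreover have "?P \<notin> right_leaf n" using right_leaf_eq[OF assms] by simp
  ultimately show ?thesis unfolding special_leaf_def by blast
qed

text \<open>The special leaves \<open>right_leaf n\<close> accumulate at \<open>(1, 0)\<close>.\<close>

lemma special_leaves_not_locally_finite:
  "\<not> locally_finite_in (top_of_set Zset) {\<omega> \<in> Delta. special_leaf Zset Delta \<omega>}"
proof
  assume "locally_finite_in (top_of_set Zset) {\<omega> \<in> Delta. special_leaf Zset Delta \<omega>}"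
  moreover have "(1, 0) \<in> topspace (top_of_set Zset)" using in_Zset_if_fst_nonzero by simp
  ultimately obtain V where V: "openin (top_of_set Zset) V" "(1, 0) \<in> V"
      "finite {\<omega> \<in> {\<omega> \<in> Delta. special_leaf Zset Delta \<omega>}. \<omega> \<inter> V \<noteq> {}}"
    unfolding locally_finite_in_def by blast
  obtain Op where Op: "open Op" "V = Zset \<inter> Op" using V(1) openin_open by blast
  then obtain e where e: "e > 0" "ball (1, 0) e \<subseteq> Op" using V(2) open_contains_ball by blast
  obtain N :: nat where N: "0 < N" "inverse (real N) < e" using e(1) ex_inverse_of_nat_less by blast
  have "right_leaf ` {N..} \<subseteq> {\<omega> \<in> {\<omega> \<in> Delta. special_leaf Zset Delta \<omega>}. \<omega> \<inter> V \<noteq> {}}"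
  proof
    fix \<omega> assume "\<omega> \<in> right_leaf ` {N..}"
    then obtain n where n: "n \<in> {N..}" "\<omega> = right_leaf n" by blast
    have n1: "n \<ge> 1" using n N by simp
    have "1 / real n \<le> inverse (real N)" using n N by (auto simp: divide_simps)
    then have "(1, 1 / real n) \<in> V \<inter> right_leaf n"
      using N e Op n1 in_Zset_if_fst_nonzero right_leaf_eq
      by (auto simp: dist_Pair_Pair dist_real_def)
    then show "\<omega> \<in> {\<omega> \<in> {\<omega> \<in> Delta. special_leaf Zset Delta \<omega>}. \<omega> \<inter> V \<noteq> {}}"
      using n n1 right_leaf_in_Delta right_leaf_special by blast
  qed
  moreover have "inj_on right_leaf {N..}"
  proof (rule inj_onI)
    fix m n assume "m \<in> {N..}" "n \<in> {N..}" "right_leaf m = right_leaf n"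
    then have "m \<ge> 1" "n \<ge> 1" using N by auto
    have "(1, 1 / real m) \<in> right_leaf m" using right_leaf_eq[OF \<open>m \<ge> 1\<close>] by simp
    then have "(1, 1 / real m) \<in> right_leaf n" using \<open>right_leaf m = right_leaf n\<close> by simp
    then have "1 / real m = 1 / real n" using right_leaf_eq[OF \<open>n \<ge> 1\<close>] by simp
    then show "m = n" by simp
  qed
  then have "infinite (right_leaf ` {N..})" using finite_imageD infinite_Ici by blast
  ultimately show False using V(3) finite_subset by blast
qed

section \<open>Striped atlases\<close>

lemma continuous_on_closure_mem:
  assumes "continuous_on D f" "A \<subseteq> D" "w \<in> D" "w \<in> closure A" "closed F" "f ` A \<subseteq> F"
  shows "f w \<in> F"
proof -
  obtain T where T: "closed T" "D \<inter> f -` F = D \<inter> T"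
    using continuous_closedin_preimage[OF assms(1,5)] closedin_closed by metis
  then have "closure A \<subseteq> T" using assms(2,6) by (intro closure_minimal) blast+
  then show ?thesis using assms(3,4) T(2) by blast
qed

lemma quotient_map_closure_preimage:
  assumes q: "quotient_map (top_of_set D) (top_of_set Z) q"
    and C: "C \<subseteq> Z" "P \<in> Z" "P \<in> closure C" "P \<notin> C"
  obtains w where "w \<in> D" "w \<in> closure (D \<inter> q -` C)" "q w \<notin> C"
proof -
  have "\<not> closedin (top_of_set Z) C"
  proof
    assume "closedin (top_of_set Z) C"
    then obtain T where T: "closed T" "C = Z \<inter> T" by (auto simp: closedin_closed)
    then have "closure C \<subseteq> T" by (intro closure_minimal) auto
    then show False using C T(2) by auto
  qed
  then have not_closed: "\<not> closedin (top_of_set D) {x \<in> D. q x \<in> C}"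
    using q C(1) unfolding quotient_map_closedin by simp
  have "closedin (top_of_set D) (D \<inter> closure (D \<inter> q -` C))"
    by (rule closedin_closed_Int) (rule closed_closure)
  then have "{x \<in> D. q x \<in> C} \<noteq> D \<inter> closure (D \<inter> q -` C)"
    using not_closed by metis
  moreover have "{x \<in> D. q x \<in> C} \<subseteq> D \<inter> closure (D \<inter> q -` C)"
    using closure_subset[of "D \<inter> q -` C"] by auto
  ultimately obtain w where "w \<in> D" "w \<in> closure (D \<inter> q -` C)" "q w \<notin> C" by auto
  then show ?thesis by (rule that)
qed

text \<open>A non-constant continuous real function takes uncountably many values near any point.\<close>

lemma sequence_avoiding_countable_values:
  fixes F :: "real \<Rightarrow> real"
  assumes F: "continuous_on J F" and J: "is_interval J" "t0 \<in> J" and Q: "countable Q"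
    and nonconst: "\<And>e. e > 0 \<Longrightarrow> \<exists>t\<in>J. \<bar>t - t0\<bar> < e \<and> F t \<noteq> F t0"
  obtains T where "\<And>m. T m \<in> J" "\<And>m. F (T m) \<notin> Q" "T \<longlonglongrightarrow> t0" "(\<lambda>m. F (T m)) \<longlonglongrightarrow> F t0"
proof -
  have "t0 \<in> closure {t \<in> J. F t \<notin> Q}"
    unfolding closure_approachable
  proof (intro allI impI)
    fix e :: real assume "e > 0"
    then obtain t where t: "t \<in> J" "\<bar>t - t0\<bar> < e" "F t \<noteq> F t0" using nonconst by blast
    have seg: "closed_segment t0 t \<subseteq> J"
      using J t(1) by (simp add: closed_segment_subset is_interval_convex)
    have "\<not> closed_segment (F t0) (F t) \<subseteq> Q"
      using uncountable_closed_segment t(3) Q countable_subset by metis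
    then obtain c where c: "c \<in> closed_segment (F t0) (F t)" "c \<notin> Q" by blast
    then obtain s where s: "s \<in> closed_segment t0 t" "F s = c"
      using IVT'_closed_segment_real continuous_on_subset[OF F seg] by blast
    have "dist s t0 \<le> dist t0 t" using dist_in_closed_segment[OF s(1)] by simp
    then have "dist s t0 < e" using t(2) by (simp add: dist_real_def abs_minus_commute)
    then show "\<exists>s\<in>{t \<in> J. F t \<notin> Q}. dist s t0 < e" using s seg c(2) by blast
  qed
  then obtain T where T: "\<And>m. T m \<in> J" "\<And>m. F (T m) \<notin> Q" "T \<longlonglongrightarrow> t0"
    unfolding closure_sequential by auto
  moreover have "(\<lambda>m. F (T m)) \<longlonglongrightarrow> F t0"
    using continuous_on_tendsto_compose[OF F T(3) J(2)] T(1) by simp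
  ultimately show ?thesis using that by blast
qed

lemma tendsto_in_closure_range:
  fixes f :: "nat \<Rightarrow> 'a :: first_countable_topology"
  assumes "f \<longlonglongrightarrow> l"
  shows "l \<in> closure (range f)"
  unfolding closure_sequential using assms by (intro exI[of _ f]) simp

lemma boundary_interval_heights:
  "X \<in> boundary_intervals a b T \<Longrightarrow> x \<in> X \<Longrightarrow> snd x = a \<or> snd x = b"
  unfolding boundary_intervals_def using in_components_subset by blast

locale striped_atlas_on =
  fixes I u v S G q Z
  assumes atlas: "striped_atlas I u v S G q Z"
begin

definition strip_interior :: "nat \<Rightarrow> real \<times> real \<Rightarrow> bool" where
  "strip_interior i x \<longleftrightarrow> i \<in> I \<and> u i < snd x \<and> snd x < v i"

lemmas atlas_conjuncts = atlas[unfolded striped_atlas_def]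

lemma quotient: "quotient_map (top_of_set (Sigma I S)) (top_of_set Z) q"
  using atlas_conjuncts by (elim conjE)

lemma strip: "i \<in> I \<Longrightarrow> strip (u i) (v i) (S i)"
  using atlas_conjuncts by (elim conjE) blast

lemma strip_band: "i \<in> I \<Longrightarrow> x \<in> S i \<Longrightarrow> u i \<le> snd x \<and> snd x \<le> v i"
  using strip unfolding strip_def by blast

lemma strip_interior_mem: "strip_interior i x \<Longrightarrow> x \<in> S i"
  using strip unfolding strip_interior_def strip_def by blast

lemma continuous: "continuous_on (Sigma I S) q"
  using quotient_imp_continuous_map[OF quotient] by simp

lemma continuous_on_strip: "i \<in> I \<Longrightarrow> continuous_on (S i) (\<lambda>x. q (i, x))"
proof -
  assume i: "i \<in> I"
  from continuous show ?thesis
    by (rule continuous_on_compose2) (use i in \<open>auto intro: continuous_intros\<close>)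
qed

lemma glued_at_strip_boundary:
  assumes "(A, B) \<in> G" "(i, x) \<in> A \<union> B"
  shows "snd x = u i \<or> snd x = v i"
proof -
  have "\<forall>(A, B)\<in>G. (\<exists>i\<in>I. \<exists>X\<in>boundary_intervals (u i) (v i) (S i). A = {i} \<times> X) \<and>
      (\<exists>j\<in>I. \<exists>Y\<in>boundary_intervals (u j) (v j) (S j). B = {j} \<times> Y) \<and> A \<noteq> B"
    using atlas_conjuncts by (elim conjE)
  then obtain i' X j' Y where
      "X \<in> boundary_intervals (u i') (v i') (S i')" "A = {i'} \<times> X"
      "Y \<in> boundary_intervals (u j') (v j') (S j')" "B = {j'} \<times> Y"
    using assms(1) by fast
  moreover have "(i = i' \<and> x \<in> X) \<or> (i = j' \<and> x \<in> Y)" using assms(2) calculation by blast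
  ultimately show ?thesis using boundary_interval_heights by blast
qed

lemma strip_interior_not_glued:
  assumes "strip_interior i x"
  shows "(i, x) \<in> Sigma I S - \<Union> {A \<union> B | A B. (A, B) \<in> G}"
proof -
  have "(i, x) \<notin> A \<union> B" if "(A, B) \<in> G" for A B
  proof
    assume "(i, x) \<in> A \<union> B"
    then have "snd x = u i \<or> snd x = v i" by (rule glued_at_strip_boundary[OF that])
    then show False using assms unfolding strip_interior_def by auto
  qed
  then have "(i, x) \<notin> \<Union> {A \<union> B | A B. (A, B) \<in> G}" by auto
  moreover have "(i, x) \<in> Sigma I S"
    using strip_interior_mem[OF assms] assms unfolding strip_interior_def by simp
  ultimately show ?thesis by simp
qed

lemma strip_interior_inj:
  assumes "strip_interior i x" "strip_interior j y" "q (i, x) = q (j, y)"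
  shows "i = j \<and> x = y"
proof -
  have "inj_on q (Sigma I S - \<Union> {A \<union> B | A B. (A, B) \<in> G})"
    using atlas_conjuncts by (elim conjE)
  from inj_onD[OF this assms(3) strip_interior_not_glued[OF assms(1)] strip_interior_not_glued[OF assms(2)]]
  show ?thesis by simp
qed

lemma strip_interior_near:
  assumes "i \<in> I" "x \<in> S i" "e > 0"
  obtains z where "strip_interior i z" "dist z x < e"
proof -
  define d where "d = min (e / 2) ((v i - u i) / 4)"
  have "u i < v i" using strip[OF assms(1)] unfolding strip_def by blast
  moreover have "d \<le> e / 2" "d \<le> (v i - u i) / 4"
    unfolding d_def by (rule min.cobounded1, rule min.cobounded2)
  ultimately have d: "0 < d" "d < e" "d \<le> (v i - u i) / 4"
    using assms(3) unfolding d_def by auto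
  define z where "z = (fst x, if snd x \<le> (u i + v i) / 2 then snd x + d else snd x - d)"
  have "strip_interior i z"
    using strip_band[OF assms(1,2)] d assms(1) unfolding z_def strip_interior_def by auto
  moreover have "dist z x < e"
    using d unfolding z_def by (cases x) (simp add: dist_Pair_Pair dist_real_def)
  ultimately show ?thesis using that by blast
qed

lemma strip_interior_near_image:
  assumes "i \<in> I" "x \<in> S i" "open V" "q (i, x) \<in> V" "e > 0"
  obtains z where "strip_interior i z" "dist z x < e" "q (i, z) \<in> V"
proof -
  obtain r where r: "r > 0" "ball (q (i, x)) r \<subseteq> V" using assms(3,4) open_contains_ball by blast
  obtain d where d: "d > 0" "\<forall>z\<in>S i. dist z x < d \<longrightarrow> dist (q (i, z)) (q (i, x)) < r"
    using continuous_on_strip[OF assms(1)] assms(2) r(1) unfolding continuous_on_iff by blast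
  obtain z where z: "strip_interior i z" "dist z x < min e d"
    by (rule strip_interior_near[OF assms(1,2), of "min e d"]) (use assms(5) d(1) in simp)
  then have "dist (q (i, z)) (q (i, x)) < r" using d(2) strip_interior_mem by simp
  then have "q (i, z) \<in> V" using r(2) by (auto simp: dist_commute)
  then show ?thesis using that z by simp
qed

lemma open_image_strip_interior:
  assumes "i \<in> I" "open D" "D \<subseteq> {x. u i < snd x \<and> snd x < v i}"
  shows "open ((\<lambda>x. q (i, x)) ` D)"
proof (rule invariance_of_domain)
  have "D \<subseteq> S i" using assms strip_interior_mem unfolding strip_interior_def by auto
  then show "continuous_on D (\<lambda>x. q (i, x))"
    using continuous_on_strip[OF assms(1)] continuous_on_subset by blast
  show "inj_on (\<lambda>x. q (i, x)) D"
  proof (rule inj_onI)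
    fix x y assume "x \<in> D" "y \<in> D" "q (i, x) = q (i, y)"
    moreover have "strip_interior i x" "strip_interior i y"
      using assms \<open>x \<in> D\<close> \<open>y \<in> D\<close> unfolding strip_interior_def by auto
    ultimately show "x = y" using strip_interior_inj by blast
  qed
qed fact

text \<open>By invariance of domain the image of a neighbourhood of an interior point is open;
  points of \<open>S k\<close> near a boundary point mapping into it would be interior points of
  strip \<open>j\<close> both close to and far from the boundary.\<close>

lemma strip_boundary_image_not_interior_image:
  assumes x: "strip_interior j x" and y: "k \<in> I" "y \<in> S k" "\<not> strip_interior k y"
  shows "q (k, y) \<noteq> q (j, x)"
proof
  assume eq: "q (k, y) = q (j, x)"
  define r where "r = min (snd x - u j) (v j - snd x) / 2"
  have r: "r > 0" "2 * r \<le> snd x - u j" "2 * r \<le> v j - snd x"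
    using x unfolding r_def strip_interior_def by auto
  have band: "ball x r \<subseteq> {z. u j < snd z \<and> snd z < v j}"
  proof
    fix z assume "z \<in> ball x r"
    then have "\<bar>snd z - snd x\<bar> < r" using dist_snd_le[of z x] by (simp add: dist_commute dist_real_def)
    then show "z \<in> {z. u j < snd z \<and> snd z < v j}" using r by (auto simp: abs_less_iff)
  qed
  have W: "open ((\<lambda>z. q (j, z)) ` ball x r)"
    using open_image_strip_interior[OF _ _ band] x unfolding strip_interior_def by simp
  have "q (k, y) \<in> (\<lambda>z. q (j, z)) ` ball x r" using eq r by simp
  then obtain z where z: "strip_interior k z" "dist z y < r" "q (k, z) \<in> (\<lambda>z. q (j, z)) ` ball x r"
    by (rule strip_interior_near_image[OF y(1,2) W _ r(1)])
  then obtain z' where z': "z' \<in> ball x r" "q (k, z) = q (j, z')" by blast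
  then have "strip_interior j z'" using band x unfolding strip_interior_def by auto
  then have "z = z'" "k = j" using strip_interior_inj[OF z(1)] z'(2) by auto
  have "\<bar>snd z - snd y\<bar> < r" using z(2) dist_snd_le[of z y] by (simp add: dist_real_def)
  moreover have "\<bar>snd z - snd x\<bar> < r"
    using z'(1) \<open>z = z'\<close> dist_snd_le[of z x] by (simp add: dist_real_def dist_commute)
  ultimately have close: "snd x - snd y < 2 * r" "snd y - snd x < 2 * r"
    unfolding abs_less_iff by linarith+
  have "snd y = u j \<or> snd y = v j"
    using y strip_band[OF y(1,2)] \<open>k = j\<close> unfolding strip_interior_def by auto
  then show False using close r by linarith
qed

lemma fibre_strip_interior:
  assumes "strip_interior k x" "g \<in> Sigma I S" "q g = q (k, x)"
  shows "g = (k, x)"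
proof -
  obtain j y where g: "g = (j, y)" by (cases g)
  show ?thesis
  proof (cases "strip_interior j y")
    case True
    then show ?thesis using strip_interior_inj[OF True assms(1)] assms g by simp
  next
    case False
    then show ?thesis using strip_boundary_image_not_interior_image[OF assms(1) _ _ False] assms g by auto
  qed
qed

lemma vertical_segment_in_strip_interior:
  assumes x: "strip_interior k x" and V: "open V" "q (k, x) \<in> V"
  obtains r where "r > 0"
    "\<And>\<tau>. \<bar>\<tau>\<bar> \<le> r \<Longrightarrow> strip_interior k (fst x, snd x + \<tau>) \<and> q (k, (fst x, snd x + \<tau>)) \<in> V"
proof -
  define f where "f \<tau> = q (k, (fst x, snd x + \<tau>))" for \<tau>
  define r0 where "r0 = min (snd x - u k) (v k - snd x) / 2"
  have r0: "r0 > 0" "2 * r0 \<le> snd x - u k" "2 * r0 \<le> v k - snd x"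
    using x unfolding r0_def strip_interior_def by auto
  have interior: "strip_interior k (fst x, snd x + \<tau>)" if "\<tau> \<in> {-r0..r0}" for \<tau>
    using x that r0 unfolding strip_interior_def by auto
  have "continuous_on {-r0..r0} f"
    unfolding f_def using x interior strip_interior_mem unfolding strip_interior_def
    by (intro continuous_on_compose2[OF continuous_on_strip] continuous_intros) auto
  moreover obtain e where e: "e > 0" "ball (q (k, x)) e \<subseteq> V" using V open_contains_ball by blast
  moreover have "0 \<in> {-r0..r0}" "f 0 = q (k, x)" using r0 unfolding f_def by auto
  ultimately obtain d where d: "d > 0" "\<forall>\<tau>\<in>{-r0..r0}. dist \<tau> 0 < d \<longrightarrow> dist (f \<tau>) (q (k, x)) < e"
    unfolding continuous_on_iff by metis
  show ?thesis
  proof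
    show "min r0 (d / 2) > 0" using r0 d by simp
    fix \<tau> :: real assume "\<bar>\<tau>\<bar> \<le> min r0 (d / 2)"
    then have \<tau>: "\<tau> \<in> {-r0..r0}" "dist \<tau> 0 < d" using d(1) by (auto simp: dist_real_def)
    then have "f \<tau> \<in> V" using d(2) e(2) by (auto simp: dist_commute)
    then show "strip_interior k (fst x, snd x + \<tau>) \<and> q (k, (fst x, snd x + \<tau>)) \<in> V"
      using interior[OF \<tau>(1)] unfolding f_def by simp
  qed
qed

text \<open>The interior of a strip near \<open>c\<close> is convex, so its image, which comes close to
  \<open>q (k, x1)\<close> and \<open>q (k, x2)\<close>, attains every height in between.\<close>

lemma strip_interior_attains_height:
  assumes k: "k \<in> I" and x1: "x1 \<in> S k" "dist c x1 < r" and x2: "x2 \<in> S k" "dist c x2 < r"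
    and h: "snd (q (k, x1)) < h" "h < snd (q (k, x2))"
  obtains x where "strip_interior k x" "dist c x < r" "snd (q (k, x)) = h"
proof -
  have below: "open {p :: real \<times> real. snd p < h}" and above: "open {p :: real \<times> real. snd p > h}"
    by (intro open_Collect_less continuous_intros)+
  obtain z1 where z1: "strip_interior k z1" "dist z1 x1 < r - dist c x1" "q (k, z1) \<in> {p. snd p < h}"
    by (rule strip_interior_near_image[OF k x1(1) below _, of "r - dist c x1"]) (use x1 h in simp_all)
  obtain z2 where z2: "strip_interior k z2" "dist z2 x2 < r - dist c x2" "q (k, z2) \<in> {p. snd p > h}"
    by (rule strip_interior_near_image[OF k x2(1) above _, of "r - dist c x2"]) (use x2 h in simp_all)
  define B where "B = ball c r \<inter> (UNIV \<times> {u k<..<v k})"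
  have B: "strip_interior k z" if "z \<in> B" for z
    using that k unfolding B_def strip_interior_def by (auto simp: mem_Times_iff)
  have "connected ((\<lambda>z. snd (q (k, z))) ` B)"
  proof (intro connected_continuous_image convex_connected)
    show "convex B" unfolding B_def by (intro convex_Int convex_ball convex_Times convex_UNIV) simp
    show "continuous_on B (\<lambda>z. snd (q (k, z)))"
      using B strip_interior_mem
      by (intro continuous_intros continuous_on_subset[OF continuous_on_strip[OF k]]) auto
  qed
  moreover have "z1 \<in> B" "z2 \<in> B"
    using z1 z2 dist_triangle[of c z1 x1] dist_triangle[of c z2 x2]
    unfolding B_def strip_interior_def by (auto simp: mem_Times_iff dist_commute)
  ultimately have "h \<in> (\<lambda>z. snd (q (k, z))) ` B"
    using z1(3) z2(3) unfolding connected_iff_interval by fastforce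
  then obtain x where "x \<in> B" "snd (q (k, x)) = h" by blast
  then show ?thesis using that B unfolding B_def by auto
qed

text \<open>Fibres of interior points are singletons, so the preimage of the image points lies on the
  strip lines of heights \<open>s m\<close>; the quotient property yields an accumulation point of it
  that is not mapped into the set.\<close>

lemma strip_lines_accumulate:
  assumes a: "\<And>m. strip_interior k (a m, s m)" and s: "s \<longlonglongrightarrow> t"
    and P: "P \<in> Z" "P \<in> closure (range (\<lambda>m. q (k, (a m, s m))))"
      "P \<notin> range (\<lambda>m. q (k, (a m, s m)))"
  obtains y where "snd y = t \<or> snd y \<in> range s"
    "q (k, y) \<in> closure (range (\<lambda>m. q (k, (a m, s m))))" "q (k, y) \<notin> range (\<lambda>m. q (k, (a m, s m)))"
proof -
  define C where "C = range (\<lambda>m. q (k, (a m, s m)))"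
  have "q ` Sigma I S \<subseteq> Z" using quotient_imp_surjective_map[OF quotient] by simp
  then have "C \<subseteq> Z" using a strip_interior_mem unfolding C_def strip_interior_def by blast
  then obtain w where w: "w \<in> Sigma I S" "w \<in> closure (Sigma I S \<inter> q -` C)" "q w \<notin> C"
    by (rule quotient_map_closure_preimage[OF quotient _ P[folded C_def]])
  have "Sigma I S \<inter> q -` C \<subseteq> {k} \<times> (UNIV \<times> insert t (range s))"
  proof
    fix g assume g: "g \<in> Sigma I S \<inter> q -` C"
    then obtain m where "q g = q (k, (a m, s m))" unfolding C_def by auto
    then have "g = (k, (a m, s m))" by (rule fibre_strip_interior[OF a IntD1[OF g]])
    then show "g \<in> {k} \<times> (UNIV \<times> insert t (range s))" by simp
  qed
  moreover have "closed ({k} \<times> (UNIV \<times> insert t (range s)))"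
    by (intro closed_Times closed_singleton closed_UNIV compact_imp_closed compact_sequence_with_limit s)
  ultimately have "w \<in> {k} \<times> (UNIV \<times> insert t (range s))" using w(2) closure_minimal by blast
  then obtain y where y: "w = (k, y)" "snd y = t \<or> snd y \<in> range s" by auto
  have "q w \<in> closure C"
    by (rule continuous_on_closure_mem[OF continuous _ w(1,2) closed_closure])
      (auto intro: closure_subset[THEN subsetD])
  then show ?thesis using that y w(3) unfolding C_def by simp
qed

end

locale striped_atlas_of_Delta = striped_atlas_on I u v S G q Zset for I u v S G q +
  assumes canonical: "canonical_foliation I u v S q = Delta"
begin

definition strip_leaf :: "nat \<Rightarrow> real \<Rightarrow> (real \<times> real) set" where
  "strip_leaf i t = q ` ({i} \<times> (UNIV \<times> {t}))"

lemma mem_strip_leaf: "q (i, x) \<in> strip_leaf i (snd x)"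
  unfolding strip_leaf_def by (metis SigmaI UNIV_I imageI prod.collapse singletonI)

lemma strip_leaf_memE:
  assumes "p \<in> strip_leaf i t"
  obtains a where "p = q (i, (a, t))"
  using assms unfolding strip_leaf_def by auto

lemma strip_leaf_eq_leaf:
  assumes "strip_interior i x"
  shows "strip_leaf i (snd x) = leaf (q (i, x))"
proof (rule Delta_leaf_eq)
  show "strip_leaf i (snd x) \<in> Delta"
    using assms canonical[symmetric] unfolding canonical_foliation_def strip_leaf_def strip_interior_def
    by blast
qed (rule mem_strip_leaf)

lemma strip_leaf_right_half:
  assumes "strip_interior k x" "fst (q (k, x)) > 0" "(0, snd (q (k, x))) \<notin> Zset"
  shows "strip_leaf k (snd x) = {p. fst p > 0 \<and> snd p = snd (q (k, x))}"
  using strip_leaf_eq_leaf[OF assms(1)] leaf_right_half[OF assms(2,3)] by simp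

lemma strip_leaf_generic_height:
  assumes "strip_interior k x" "generic_height (snd (q (k, x)))"
  shows "strip_leaf k (snd x) = {p. snd p = snd (q (k, x))}"
  using strip_leaf_eq_leaf[OF assms(1)] leaf_generic_height[OF assms(2)] by simp

lemma right_half_leaf_single_strip_line:
  assumes x: "strip_interior k x" "fst (q (k, x)) > 0" "(0, snd (q (k, x))) \<notin> Zset"
    and y: "strip_interior k y" "fst (q (k, y)) > 0" "snd (q (k, y)) = snd (q (k, x))"
  shows "snd y = snd x"
proof -
  have "q (k, y) \<in> strip_leaf k (snd x)" using strip_leaf_right_half[OF x] y by simp
  then obtain a where a: "q (k, y) = q (k, (a, snd x))" by (rule strip_leaf_memE)
  have "strip_interior k (a, snd x)" using x(1) unfolding strip_interior_def by simp
  then show ?thesis using strip_interior_inj[OF y(1) _ a] by simp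
qed

text \<open>Moving vertically away from an interior point on a right half-leaf, the heights of
  the image leave \<open>snd (q (k, x))\<close> at once, hence pass through uncountably many, in
  particular generic, values.\<close>

lemma generic_strip_leaves_near:
  assumes x: "strip_interior k x" and pos: "fst (q (k, x)) > 0"
    and h: "(0, snd (q (k, x))) \<notin> Zset"
  obtains s where "s \<longlonglongrightarrow> snd x" "\<And>m. strip_interior k (fst x, s m)"
    "\<And>m. generic_height (snd (q (k, (fst x, s m))))"
    "(\<lambda>m. snd (q (k, (fst x, s m)))) \<longlonglongrightarrow> snd (q (k, x))"
proof -
  have "open {p :: real \<times> real. fst p > 0}" by (intro open_Collect_less continuous_intros)
  moreover have "q (k, x) \<in> {p. fst p > 0}" using pos by simp
  ultimately obtain r where r: "r > 0" and segment: "\<And>\<tau>. \<bar>\<tau>\<bar> \<le> r \<Longrightarrow>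
      strip_interior k (fst x, snd x + \<tau>) \<and> q (k, (fst x, snd x + \<tau>)) \<in> {p. fst p > 0}"
    by (rule vertical_segment_in_strip_interior[OF x]) blast
  have J: "strip_interior k (fst x, snd x + \<tau>) \<and> fst (q (k, (fst x, snd x + \<tau>))) > 0"
    if "\<tau> \<in> {-r..r}" for \<tau>
    using segment[of \<tau>] that by (simp add: abs_le_iff)
  define F where "F \<tau> = snd (q (k, (fst x, snd x + \<tau>)))" for \<tau>
  have F0: "F 0 = snd (q (k, x))" unfolding F_def by simp
  have F: "continuous_on {-r..r} F"
    unfolding F_def using J strip_interior_mem x unfolding strip_interior_def
    by (intro continuous_intros continuous_on_compose2[OF continuous_on_strip]) auto
  have nonconst: "\<exists>\<tau>\<in>{-r..r}. \<bar>\<tau> - 0\<bar> < e \<and> F \<tau> \<noteq> F 0" if "e > 0" for e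
  proof (intro bexI conjI)
    let ?\<tau> = "min r (e / 2)"
    show "?\<tau> \<in> {-r..r}" "\<bar>?\<tau> - 0\<bar> < e" using r that by auto
    show "F ?\<tau> \<noteq> F 0"
    proof
      assume "F ?\<tau> = F 0"
      then have "snd (q (k, (fst x, snd x + ?\<tau>))) = snd (q (k, x))" using F0 unfolding F_def by simp
      moreover have "strip_interior k (fst x, snd x + ?\<tau>)" "fst (q (k, (fst x, snd x + ?\<tau>))) > 0"
        using J[OF \<open>?\<tau> \<in> {-r..r}\<close>] by auto
      ultimately have "snd x + ?\<tau> = snd x"
        using right_half_leaf_single_strip_line[OF x pos h, of "(fst x, snd x + ?\<tau>)"] by simp
      then show False using r that by simp
    qed
  qed
  have "0 \<in> {-r..r}" using r by simp
  then obtain T where T: "\<And>m. T m \<in> {-r..r}" "\<And>m. F (T m) \<notin> {c. \<not> generic_height c}"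
      "T \<longlonglongrightarrow> 0" "(\<lambda>m. F (T m)) \<longlonglongrightarrow> F 0"
    using sequence_avoiding_countable_values[OF F is_interval_cc _ countable_non_generic_heights nonconst]
    by blast
  show ?thesis
  proof
    show "(\<lambda>m. snd x + T m) \<longlonglongrightarrow> snd x" using tendsto_add[OF tendsto_const T(3)] by simp
    show "strip_interior k (fst x, snd x + T m)" for m using J T(1) by blast
    show "generic_height (snd (q (k, (fst x, snd x + T m))))" for m using T(2) unfolding F_def by simp
    show "(\<lambda>m. snd (q (k, (fst x, snd x + T m)))) \<longlonglongrightarrow> snd (q (k, x))"
      using T(4) unfolding F_def by simp
  qed
qed

text \<open>The generic leaves found above are full lines; their points with abscissa \<open>-1\<close>
  accumulate at a point of the left half-leaf, which no strip can reach.\<close>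

lemma no_strip_interior_point_on_right_half_leaf:
  assumes x: "strip_interior k x" and pos: "fst (q (k, x)) > 0"
    and h: "(0, snd (q (k, x))) \<notin> Zset"
  shows False
proof -
  obtain s where s: "s \<longlonglongrightarrow> snd x" "\<And>m. strip_interior k (fst x, s m)"
      "\<And>m. generic_height (snd (q (k, (fst x, s m))))"
      "(\<lambda>m. snd (q (k, (fst x, s m)))) \<longlonglongrightarrow> snd (q (k, x))"
    by (rule generic_strip_leaves_near[OF x pos h]) blast
  define c where "c m = snd (q (k, (fst x, s m)))" for m
  have full: "strip_leaf k (s m) = {p. snd p = c m}" for m
    using strip_leaf_generic_height[OF s(2) s(3)] unfolding c_def by simp
  have "\<exists>a. q (k, (a, s m)) = (-1, c m)" for m
    using full[of m] strip_leaf_memE[of "(-1, c m)" k "s m"] by (metis mem_Collect_eq snd_conv)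
  then obtain a where a: "\<And>m. q (k, (a m, s m)) = (-1, c m)" by metis
  have a_int: "strip_interior k (a m, s m)" for m using s(2) unfolding strip_interior_def by simp
  define C where "C = range (\<lambda>m. (-1 :: real, c m))"
  have C_eq: "range (\<lambda>m. q (k, (a m, s m))) = C" unfolding C_def a ..
  let ?P = "(-1 :: real, snd (q (k, x)))"
  have "c \<longlonglongrightarrow> snd (q (k, x))" using s(4) unfolding c_def .
  then have "?P \<in> closure C"
    unfolding C_def by (intro tendsto_in_closure_range tendsto_Pair tendsto_const)
  moreover have "?P \<in> Zset" using in_Zset_if_fst_nonzero by simp
  moreover have "?P \<notin> C" using s(3) h axis_in_Zset_iff unfolding C_def c_def by auto
  ultimately obtain y where y: "snd y = snd x \<or> snd y \<in> range s" "q (k, y) \<in> closure C" "q (k, y) \<notin> C"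
    using strip_lines_accumulate[OF a_int s(1), of ?P] unfolding C_eq by blast
  have "closed {p :: real \<times> real. fst p = -1}" by (intro closed_Collect_eq continuous_intros)
  then have "closure C \<subseteq> {p. fst p = -1}" unfolding C_def by (intro closure_minimal) auto
  then have fst_y: "fst (q (k, y)) = -1" using y(2) by auto
  have "q (k, y) \<in> strip_leaf k (snd y)" by (rule mem_strip_leaf)
  show False
  proof (cases "snd y = snd x")
    case True
    then show False using \<open>q (k, y) \<in> strip_leaf k (snd y)\<close> fst_y strip_leaf_right_half[OF x pos h]
      by simp
  next
    case False
    then obtain m where "snd y = s m" using y(1) by blast
    then have "q (k, y) = (-1, c m)"
      using \<open>q (k, y) \<in> strip_leaf k (snd y)\<close> fst_y full[of m] by (simp add: prod_eq_iff)
    then show False using y(3) unfolding C_def by auto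
  qed
qed

text \<open>A preimage \<open>(k, c)\<close> of \<open>(1, 0)\<close> is a limit of preimages of points \<open>(1, 1/m)\<close>,
  which therefore lie in the same strip close to \<open>c\<close>.\<close>

lemma strip_interior_meets_right_half_leaf:
  obtains k x where "strip_interior k x" "fst (q (k, x)) > 0" "(0, snd (q (k, x))) \<notin> Zset"
proof -
  define C0 where "C0 = range (\<lambda>m::nat. (1::real, 1 / real (Suc m)))"
  have lim0: "(\<lambda>m::nat. (1::real, 1 / real (Suc m))) \<longlonglongrightarrow> (1, 0)"
    using LIMSEQ_inverse_real_of_nat by (intro tendsto_intros) (simp add: inverse_eq_divide)
  have "C0 \<subseteq> Zset" "(1, 0) \<in> Zset" unfolding C0_def using in_Zset_if_fst_nonzero by auto
  moreover have "(1, 0) \<in> closure C0" unfolding C0_def by (rule tendsto_in_closure_range[OF lim0])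
  moreover have "(1, 0) \<notin> C0" unfolding C0_def by auto
  ultimately obtain w where w: "w \<in> Sigma I S" "w \<in> closure (Sigma I S \<inter> q -` C0)" "q w \<notin> C0"
    by (rule quotient_map_closure_preimage[OF quotient])
  have closed: "closed (insert (1, 0) C0)"
    unfolding C0_def by (intro compact_imp_closed compact_sequence_with_limit lim0)
  have "q w \<in> insert (1, 0) C0"
    by (rule continuous_on_closure_mem[OF continuous _ w(1,2) closed]) auto
  then have qw: "q w = (1, 0)" using w(3) by simp
  obtain k c where wk: "w = (k, c)" by (cases w)
  have k: "k \<in> I" and c: "c \<in> S k" using w(1) wk by auto
  obtain r where r: "r > 0" "\<forall>z\<in>S k. dist z c < r \<longrightarrow> dist (q (k, z)) (1, 0) < 1 / 2"
    using continuous_on_strip[OF k] c qw wk unfolding continuous_on_iff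
    by (metis zero_less_divide_1_iff zero_less_numeral)
  have "open ({k} \<times> ball c r)" by (intro open_Times open_discrete open_ball)
  moreover have "w \<in> ({k} \<times> ball c r) \<inter> closure (Sigma I S \<inter> q -` C0)" using w wk r by simp
  ultimately have "({k} \<times> ball c r) \<inter> (Sigma I S \<inter> q -` C0) \<noteq> {}"
    using open_Int_closure_eq_empty by blast
  then obtain y m0 where y: "dist c y < r" "y \<in> S k" "q (k, y) = (1, 1 / real (Suc m0))"
    unfolding C0_def by auto
  define h where "h = 1 / real (Suc (Suc m0))"
  have "snd (q (k, c)) < h" "h < snd (q (k, y))" using qw wk y(3) unfolding h_def by (auto simp: divide_simps)
  then obtain x where x: "strip_interior k x" "dist c x < r" "snd (q (k, x)) = h"
    using strip_interior_attains_height[OF k c _ y(2,1)] r(1) by auto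
  have "dist (q (k, x)) (1, 0) < 1 / 2"
    using r(2) x(1,2) strip_interior_mem by (auto simp: dist_commute)
  then have "fst (q (k, x)) > 0" using dist_fst_le[of "q (k, x)" "(1, 0)"] by (simp add: dist_real_def)
  moreover have "(0, snd (q (k, x))) \<notin> Zset"
    using x(3) axis_notin_Zset[of "Suc (Suc m0)"] unfolding h_def by simp
  ultimately show ?thesis using that x(1) by blast
qed

end

lemma no_striped_atlas_for_Delta:
  "\<not> (\<exists>I u v S G q. striped_atlas I u v S G q Zset \<and> canonical_foliation I u v S q = Delta)"
proof
  assume "\<exists>I u v S G q. striped_atlas I u v S G q Zset \<and> canonical_foliation I u v S q = Delta"
  then obtain I u v S G q where "striped_atlas I u v S G q Zset" "canonical_foliation I u v S q = Delta"
    by blast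
  then interpret striped_atlas_of_Delta I u v S G q
    by (simp add: striped_atlas_of_Delta_def striped_atlas_on_def striped_atlas_of_Delta_axioms_def)
  obtain k x where "strip_interior k x" "fst (q (k, x)) > 0" "(0, snd (q (k, x))) \<notin> Zset"
    by (rule strip_interior_meets_right_half_leaf)
  then show False by (rule no_strip_interior_point_on_right_half_leaf)
qed

theorem mainTheorem9:
  shows "(\<forall>\<omega>\<in>Delta. \<exists>\<gamma>. cross_section Zset Delta \<omega> \<gamma>) \<and>
         \<not> locally_finite_in (top_of_set Zset) {\<omega> \<in> Delta. special_leaf Zset Delta \<omega>} \<and>
         \<not> (\<exists>I u v S G q. striped_atlas I u v S G q Zset \<and> canonical_foliation I u v S q = Delta)"
  using Delta_has_cross_sections special_leaves_not_locally_finite no_striped_atlas_for_Delta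
  by blast

end
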